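(* Let $X$ have a pdf $f$ satisfying Conditions (A) and (B) below. For $\delta>0$ let $D=D(Q_{\mathrm{uni}}^\delta)$ be the mean-squared distortion of the uniform quantizer with cell size $\delta$. Then $$\lim_{\delta\to0}\frac{\mathrm{AoI}(S_{\mathrm z},Q_{\mathrm{uni}}^\delta,F^* )}{\log_2 D}=-\frac34$$ and $$\lim_{\delta\to0}\Big[\mathrm{AoI}(S_{\mathrm z},Q_{\mathrm{uni}}^\delta,F^* )+\tfrac32\log_2\delta\Big]=\tfrac32 h(X).$$
   Context: Let $X$ be a real random variable with pdf $f$. Condition (A): $f$ is continuous and differentiable, and its support is a bounded interval $I$. Condition (B): the integrals $\int_I f(x)\log_2^2 f(x)\,dx$ and the differential entropy $h(X)=-\int_I f(x)\log_2 f(x)\,dx$ exist and are finite. Quantizers. A quantizer $Q$ partitions $I$ into intervals $[a_{i-1},a_i]$ with representation points $c_i$. Write $p_i=P(X\in[a_{i-1},a_i])$. The mean-squared distortion is $D(Q)=\sum_i\int_{a_{i-1}}^{a_i}(x-c_i)^2f(x)\,dx$. The uniform quantizer $Q_{\mathrm{uni}}^\delta$ partitions $I$ into consecutive cells of length $\delta$, with representation points at the cell midpoints. Codes. A real-valued code assigns lengths $l_i\in\mathbb R^+$ to the cells, subject to $\sum_i2^{-l_i}\le1$. The random codeword length is $L=l_i$ when $X$ is in cell $i$. Objective. Under the zero-wait sampling policy $S_{\mathrm z}$, the AoI of a code $l$ is $\mathrm{AoI}(S_{\mathrm z},Q,l)=\frac{E[L^2]}{2E[L]}+E[L]$. We write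 $\mathrm{AoI}(S_{\mathrm z},Q,F^* )=\inf_l\mathrm{AoI}(S_{\mathrm z},Q,l)$, the infimum over real-valued codes; this is the value of the real-valued AoI-optimal code $F^*$. *)

theory Defs
  imports "HOL-Analysis.Analysis"
begin

text \<open>A quantizer with n cells: cell i (for i in 1..n) is the interval
  [q (i-1), q i], with representation point c i.\<close>

definition cell_prob :: "(real \<Rightarrow> real) \<Rightarrow> (nat \<Rightarrow> real) \<Rightarrow> nat \<Rightarrow> real" where
  "cell_prob f q i = (LINT x:{q (i - 1)..q i}|lborel. f x)"

definition distortion ::
  "(real \<Rightarrow> real) \<Rightarrow> nat \<Rightarrow> (nat \<Rightarrow> real) \<Rightarrow> (nat \<Rightarrow> real) \<Rightarrow> real" where
  "distortion f n q c = (\<Sum>i=1..n. LINT x:{q (i - 1)..q i}|lborel. (x - c i)^2 * f x)"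

definition mean_len :: "(real \<Rightarrow> real) \<Rightarrow> nat \<Rightarrow> (nat \<Rightarrow> real) \<Rightarrow> (nat \<Rightarrow> real) \<Rightarrow> real" where
  "mean_len f n q l = (\<Sum>i=1..n. cell_prob f q i * l i)"

definition second_moment_len ::
  "(real \<Rightarrow> real) \<Rightarrow> nat \<Rightarrow> (nat \<Rightarrow> real) \<Rightarrow> (nat \<Rightarrow> real) \<Rightarrow> real" where
  "second_moment_len f n q l = (\<Sum>i=1..n. cell_prob f q i * (l i)^2)"

definition real_code :: "nat \<Rightarrow> (nat \<Rightarrow> real) \<Rightarrow> bool" where
  "real_code n l \<longleftrightarrow> (\<forall>i\<in>{1..n}. 0 < l i) \<and> (\<Sum>i=1..n. 2 powr (- l i)) \<le> 1"

definition aoi_zw :: "(real \<Rightarrow> real) \<Rightarrow> nat \<Rightarrow> (nat \<Rightarrow> real) \<Rightarrow> (nat \<Rightarrow> real) \<Rightarrow> real" where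
  "aoi_zw f n q l = second_moment_len f n q l / (2 * mean_len f n q l) + mean_len f n q l"

definition aoi_opt :: "(real \<Rightarrow> real) \<Rightarrow> nat \<Rightarrow> (nat \<Rightarrow> real) \<Rightarrow> real" where
  "aoi_opt f n q = (INF l \<in> {l. real_code n l}. aoi_zw f n q l)"

definition uni_num :: "real \<Rightarrow> real \<Rightarrow> real \<Rightarrow> nat" where
  "uni_num lo hi \<delta> = nat \<lceil>(hi - lo) / \<delta>\<rceil>"

definition uni_pts :: "real \<Rightarrow> real \<Rightarrow> nat \<Rightarrow> real" where
  "uni_pts lo \<delta> i = lo + real i * \<delta>"

definition uni_mid :: "real \<Rightarrow> real \<Rightarrow> nat \<Rightarrow> real" where
  "uni_mid lo \<delta> i = lo + (real i - 1/2) * \<delta>"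

definition diff_entropy :: "(real \<Rightarrow> real) \<Rightarrow> real \<Rightarrow> real \<Rightarrow> real" where
  "diff_entropy f lo hi = - (LINT x:{lo..hi}|lborel. f x * log 2 (f x))"

end

theory Submission
  imports Defs "HOL-Real_Asymp.Real_Asymp"
begin

(* Write p_i for the cell probabilities of the uniform quantizer with step \<delta>.
   For any real code, Gibbs' inequality gives E[L] \<ge> H(p) and Jensen gives
   E[L^2] \<ge> E[L]^2, so its AoI is at least (3/2) H(p); the Shannon code
   l_i = - log p_i has AoI (3/2) H(p) + Var(log p) / (2 H(p)).
   As f is continuous on its compact support, the sums \<Sum>i. \<delta> \<psi>(p_i/\<delta>) are
   Riemann sums of \<psi> \<circ> f; for \<psi> t = t log t and t log^2 t this yields
   H(p) + log \<delta> \<rightarrow> h(X) with Var(log p) bounded, while H(p) \<rightarrow> \<infinity>.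
   Hence AoI + (3/2) log \<delta> \<rightarrow> (3/2) h(X). Finally \<delta>^2/24 \<le> D \<le> \<delta>^2/4 for
   small \<delta>, so log D / log \<delta> \<rightarrow> 2, which turns the offset into the ratio -3/4. *)

section \<open>Limits and integrals on the real line\<close>

lemma at_0_within_atLeast_0: "at (0::real) within {0..} = at_right 0"
proof -
  have "at (0::real) within {0..} = at 0 within {0<..}"
    by (rule at_within_nhd[of _ UNIV]) auto
  then show ?thesis by simp
qed

lemma continuous_on_atLeast_0_from_right:
  fixes g :: "real \<Rightarrow> real"
  assumes "continuous_on {0<..} g" "(g \<longlongrightarrow> g 0) (at_right 0)"
  shows "continuous_on {0..} g"
  unfolding continuous_on_eq_continuous_within
proof
  fix x :: real assume "x \<in> {0..}"
  show "continuous (at x within {0..}) g"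
  proof (cases "x = 0")
    case True
    then show ?thesis using assms(2) by (simp add: continuous_within at_0_within_atLeast_0)
  next
    case False
    with \<open>x \<in> {0..}\<close> have "isCont g x"
      using assms(1) by (simp add: continuous_on_eq_continuous_at)
    then show ?thesis by (rule continuous_at_imp_continuous_at_within)
  qed
qed

lemma continuous_on_mult_log:
  "continuous_on {0..} (\<lambda>t::real. t * log b t)"
proof -
  have eq: "(\<lambda>t::real. t * log b t) = (\<lambda>t. t * ln t * (1 / ln b))"
    by (simp add: log_def)
  have "((\<lambda>t::real. t * ln t) \<longlongrightarrow> 0) (at_right 0)"
    by real_asymp
  then show ?thesis
    unfolding eq by (intro continuous_on_atLeast_0_from_right continuous_intros tendsto_mult_left) auto
qed

lemma continuous_on_mult_log_squared:
  "continuous_on {0..} (\<lambda>t::real. t * (log b t)^2)"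
proof -
  have eq: "(\<lambda>t::real. t * (log b t)^2) = (\<lambda>t. t * (ln t)^2 * (1 / ln b)^2)"
    by (simp add: log_def power_divide)
  have "((\<lambda>t::real. t * (ln t)^2) \<longlongrightarrow> 0) (at_right 0)"
    by real_asymp
  then show ?thesis
    unfolding eq by (intro continuous_on_atLeast_0_from_right continuous_intros tendsto_mult_left) auto
qed

lemma filterlim_log_at_bot_at_right_0:
  fixes b :: real
  assumes "1 < b"
  shows "filterlim (log b) at_bot (at_right 0)"
proof -
  have "filterlim (\<lambda>x. (1 / ln b) * ln x) at_bot (at_right 0)"
    using assms by (intro filterlim_tendsto_pos_mult_at_bot[OF tendsto_const _ ln_at_0]) simp
  then show ?thesis
    by (simp add: log_def[abs_def])
qed

lemma log_ratio_bounds: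
  fixes b c C x y :: real
  assumes b: "1 < b" and c: "0 < c" and x: "0 < x" "x < 1"
    and y: "c * x ^ k \<le> y" "y \<le> C * x ^ k"
  shows "real k + log b C / log b x \<le> log b y / log b x"
    and "log b y / log b x \<le> real k + log b c / log b x"
proof -
  have pos: "0 < c * x ^ k"
    using c x by simp
  then have "0 < C * x ^ k"
    using y by linarith
  then have "0 < C"
    using x by (simp add: zero_less_mult_iff)
  have neg: "log b x < 0"
    using b x by (simp add: log_less_zero_cancel_iff)
  have "log b y \<le> log b (C * x ^ k)"
    using pos y b by (subst log_le_cancel_iff) auto
  also have "log b (C * x ^ k) = log b C + k * log b x"
    using \<open>0 < C\<close> x by (simp add: log_mult log_nat_power)
  finally have "(log b C + k * log b x) / log b x \<le> log b y / log b x"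
    by (rule divide_right_mono_neg) (use neg in simp)
  then show "real k + log b C / log b x \<le> log b y / log b x"
    using neg by (simp add: add_divide_distrib)
  have "log b (c * x ^ k) \<le> log b y"
    using pos y b by (subst log_le_cancel_iff) auto
  also have "log b (c * x ^ k) = log b c + k * log b x"
    using c x by (simp add: log_mult log_nat_power)
  finally have "log b y / log b x \<le> (log b c + k * log b x) / log b x"
    by (rule divide_right_mono_neg) (use neg in simp)
  then show "log b y / log b x \<le> real k + log b c / log b x"
    using neg by (simp add: add_divide_distrib)
qed

lemma tendsto_log_ratio_power_bounds:
  fixes D :: "real \<Rightarrow> real" and b c C :: real
  assumes b: "1 < b" and c: "0 < c"
    and bounds: "\<forall>\<^sub>F x in at_right 0. c * x ^ k \<le> D x \<and> D x \<le> C * x ^ k"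
  shows "((\<lambda>x. log b (D x) / log b x) \<longlongrightarrow> real k) (at_right 0)"
proof (rule tendsto_sandwich)
  have log_inf: "filterlim (log b) at_infinity (at_right 0)"
    using filterlim_log_at_bot_at_right_0[OF b] by (rule filterlim_at_bot_imp_at_infinity)
  show "((\<lambda>x. real k + log b C / log b x) \<longlongrightarrow> real k) (at_right 0)"
    "((\<lambda>x. real k + log b c / log b x) \<longlongrightarrow> real k) (at_right 0)"
    using tendsto_add[OF tendsto_const tendsto_divide_0[OF tendsto_const log_inf]] by auto
  show "\<forall>\<^sub>F x in at_right 0. real k + log b C / log b x \<le> log b (D x) / log b x"
    "\<forall>\<^sub>F x in at_right 0. log b (D x) / log b x \<le> real k + log b c / log b x"
    using eventually_at_right_real[OF zero_less_one] bounds
    by (eventually_elim, use log_ratio_bounds[OF b c] in auto)+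
qed

lemma tendsto_divide_log_of_offset:
  fixes g D :: "real \<Rightarrow> real" and a b k L :: real
  assumes b: "1 < b" and "k \<noteq> 0"
    and offset: "((\<lambda>x. g x + a * log b x) \<longlongrightarrow> L) (at_right 0)"
    and ratio: "((\<lambda>x. log b (D x) / log b x) \<longlongrightarrow> k) (at_right 0)"
  shows "((\<lambda>x. g x / log b (D x)) \<longlongrightarrow> - a / k) (at_right 0)"
proof -
  have log_inf: "filterlim (log b) at_infinity (at_right 0)"
    using filterlim_log_at_bot_at_right_0[OF b] by (rule filterlim_at_bot_imp_at_infinity)
  have lim: "((\<lambda>x. ((g x + a * log b x) / log b x - a) / (log b (D x) / log b x))
          \<longlongrightarrow> (0 - a) / k) (at_right 0)"
    by (intro tendsto_intros tendsto_divide_0[OF offset log_inf] ratio \<open>k \<noteq> 0\<close>)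
  have "\<forall>\<^sub>F x in at_right 0.
      ((g x + a * log b x) / log b x - a) / (log b (D x) / log b x) = g x / log b (D x)"
    using eventually_at_right_real[OF zero_less_one]
  proof (rule eventually_mono)
    fix x :: real assume "x \<in> {0<..<1}"
    then have "log b x \<noteq> 0" using b by (simp add: log_less_zero_cancel_iff less_imp_neq)
    then have "(g x + a * log b x) / log b x - a = g x / log b x"
      by (simp add: field_simps)
    then show "((g x + a * log b x) / log b x - a) / (log b (D x) / log b x) = g x / log b (D x)"
      using \<open>log b x \<noteq> 0\<close> by simp
  qed
  from tendsto_cong[OF this] lim show ?thesis
    by simp
qed

lemma sum_integral_consecutive:
  fixes w :: "real \<Rightarrow> real" and q :: "nat \<Rightarrow> real"
  assumes "mono q" "\<And>a b. w integrable_on {a..b}"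
  shows "(\<Sum>i=1..n. integral {q (i - 1)..q i} w) = integral {q 0..q n} w"
proof (induction n)
  case (Suc n)
  have "q 0 \<le> q n" "q n \<le> q (Suc n)"
    using assms(1) by (auto simp: mono_def)
  then show ?case
    using Suc Henstock_Kurzweil_Integration.integral_combine[of "q 0" "q n" "q (Suc n)" w] assms(2)
    by (simp add: sum.atLeast1_atMost_eq)
qed simp

lemma integrable_on_of_continuous_on_support:
  fixes w :: "real \<Rightarrow> real"
  assumes "continuous_on {lo..hi} w" "\<And>x. x \<notin> {lo..hi} \<Longrightarrow> w x = 0"
  shows "w integrable_on {a..b}"
proof -
  have "w integrable_on UNIV"
    using integrable_continuous_interval[OF assms(1)] by (rule integrable_on_superset) (use assms(2) in auto)
  then show ?thesis
    by (rule integrable_on_subinterval) simp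
qed

lemma integral_eq_of_continuous_on_support:
  fixes w :: "real \<Rightarrow> real"
  assumes "continuous_on {lo..hi} w" "\<And>x. x \<notin> {lo..hi} \<Longrightarrow> w x = 0" "lo \<le> hi" "hi \<le> b"
  shows "integral {lo..b} w = integral {lo..hi} w"
proof -
  have "(w has_integral 0) {hi..b}"
    by (rule has_integral_spike_finite[where S = "{hi}" and f = "\<lambda>_. 0"]) (use assms(2) in auto)
  then show ?thesis
    using Henstock_Kurzweil_Integration.integral_combine[of lo hi b w]
      integrable_on_of_continuous_on_support[OF assms(1,2)] assms(3,4)
    by (simp add: integral_unique)
qed

lemma abs_integral_diff_const_le:
  fixes w :: "real \<Rightarrow> real"
  assumes "w integrable_on {a..b}" "a \<le> b" "\<And>x. x \<in> {a..b} \<Longrightarrow> \<bar>w x - v\<bar> \<le> e"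
  shows "\<bar>integral {a..b} w - (b - a) * v\<bar> \<le> e * (b - a)"
proof -
  have diff: "((\<lambda>x. w x - v) has_integral integral {a..b} w - (b - a) * v) {a..b}"
    using has_integral_diff[OF integrable_integral[OF assms(1)] has_integral_const_real[of v a b]] assms(2)
    by (simp add: mult.commute)
  have "0 \<le> e"
    using assms(3)[of a] assms(2) by force
  have "norm (integral {a..b} w - (b - a) * v) \<le> e * measure lborel {a..b}"
    by (rule has_integral_bound_real[OF \<open>0 \<le> e\<close> _ diff, where S = "{}"]) (use assms(3) in auto)
  then show ?thesis
    using assms(2) by simp
qed

lemma has_integral_midpoint_deviation_squared:
  fixes a b :: real
  assumes "a \<le> b"
  shows "((\<lambda>x. (x - (a + b) / 2)^2) has_integral (b - a)^3 / 12) {a..b}"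
proof -
  have "((\<lambda>x. (x - (a + b) / 2)^2) has_integral
          (b - (a + b) / 2)^3 / 3 - (a - (a + b) / 2)^3 / 3) {a..b}"
    by (intro fundamental_theorem_of_calculus assms)
       (auto simp: has_real_derivative_iff_has_vector_derivative[symmetric]
             intro!: derivative_eq_intros)
  moreover have "(b - (a + b) / 2)^3 / 3 - (a - (a + b) / 2)^3 / 3 = (b - a)^3 / 12"
    by (simp add: power3_eq_cube field_simps)
  ultimately show ?thesis by simp
qed

lemma integral_midpoint_deviation_ge:
  fixes w :: "real \<Rightarrow> real"
  assumes "a \<le> b" "(\<lambda>x. (x - (a + b) / 2)^2 * w x) integrable_on {a..b}"
    and "\<And>x. x \<in> {a..b} \<Longrightarrow> c \<le> w x"
  shows "c * (b - a)^3 / 12 \<le> integral {a..b} (\<lambda>x. (x - (a + b) / 2)^2 * w x)"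
proof (rule has_integral_le)
  show "((\<lambda>x. (x - (a + b) / 2)^2 * c) has_integral c * (b - a)^3 / 12) {a..b}"
    using has_integral_mult_left[OF has_integral_midpoint_deviation_squared[OF assms(1)], of c]
    by (simp add: mult.commute)
  show "((\<lambda>x. (x - (a + b) / 2)^2 * w x) has_integral
          integral {a..b} (\<lambda>x. (x - (a + b) / 2)^2 * w x)) {a..b}"
    using assms(2) by (rule integrable_integral)
qed (use assms(3) in \<open>auto intro: mult_left_mono\<close>)

section \<open>Real-valued codes\<close>

lemma entropy_le_mean_length:
  fixes p l :: "'a \<Rightarrow> real"
  assumes "finite S" "\<And>i. i \<in> S \<Longrightarrow> 0 \<le> p i" "sum p S = 1"
    and kraft: "(\<Sum>i\<in>S. 2 powr (- l i)) \<le> 1"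
  shows "- (\<Sum>i\<in>S. p i * log 2 (p i)) \<le> (\<Sum>i\<in>S. p i * l i)"
proof -
  have term_bound: "(p i - 2 powr (- l i)) / ln 2 \<le> p i * l i + p i * log 2 (p i)"
    if "i \<in> S" for i
  proof (cases "p i = 0")
    case False
    with assms(2) that have p: "0 < p i" by force
    have "ln (2 powr (- l i) / p i) = (- l i - log 2 (p i)) * ln 2"
      using p by (simp add: ln_div log_def field_simps)
    moreover have "ln (2 powr (- l i) / p i) \<le> 2 powr (- l i) / p i - 1"
      using p by (intro ln_le_minus_one) simp
    ultimately have "p i * ((- l i - log 2 (p i)) * ln 2) \<le> p i * (2 powr (- l i) / p i - 1)"
      using p by (intro mult_left_mono) simp_all
    then have "- (p i * l i + p i * log 2 (p i)) * ln 2 \<le> 2 powr (- l i) - p i"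
      using p by (simp add: algebra_simps)
    then show ?thesis
      by (simp add: divide_le_eq algebra_simps)
  qed simp
  have "0 \<le> (1 - (\<Sum>i\<in>S. 2 powr (- l i))) / ln 2"
    using kraft by simp
  also have "\<dots> = (\<Sum>i\<in>S. (p i - 2 powr (- l i)) / ln 2)"
    using assms(3) by (simp add: sum_divide_distrib[symmetric] sum_subtractf)
  also have "\<dots> \<le> (\<Sum>i\<in>S. p i * l i + p i * log 2 (p i))"
    by (rule sum_mono) (rule term_bound)
  finally show ?thesis by (simp add: sum.distrib)
qed

lemma square_mean_le_mean_square:
  fixes p x :: "'a \<Rightarrow> real"
  assumes "\<And>i. i \<in> S \<Longrightarrow> 0 \<le> p i" "sum p S = 1"
  shows "(\<Sum>i\<in>S. p i * x i)^2 \<le> (\<Sum>i\<in>S. p i * (x i)^2)"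
proof -
  define m where "m = (\<Sum>i\<in>S. p i * x i)"
  have "0 \<le> (\<Sum>i\<in>S. p i * (x i - m)^2)"
    using assms(1) by (intro sum_nonneg) auto
  also have "\<dots> = (\<Sum>i\<in>S. p i * (x i)^2) - 2 * m * (\<Sum>i\<in>S. p i * x i) + m^2 * sum p S"
    by (simp add: power2_diff algebra_simps sum.distrib sum_subtractf sum_distrib_left sum_distrib_right)
  finally show ?thesis
    using assms(2) by (simp add: m_def power2_eq_square)
qed

definition shannon_code :: "(real \<Rightarrow> real) \<Rightarrow> (nat \<Rightarrow> real) \<Rightarrow> nat \<Rightarrow> real" where
  "shannon_code f q i = - log 2 (cell_prob f q i)"

lemma shannon_code_real_code:
  assumes pos: "\<And>i. i \<in> {1..n} \<Longrightarrow> 0 < cell_prob f q i"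
    and sum: "(\<Sum>i=1..n. cell_prob f q i) = 1" and "2 \<le> n"
  shows "real_code n (shannon_code f q)"
  unfolding real_code_def
proof
  have "cell_prob f q i < 1" if i: "i \<in> {1..n}" for i
  proof -
    define j where "j = (if i = 1 then 2 else 1 :: nat)"
    have j: "j \<in> {1..n}" "j \<noteq> i"
      using \<open>2 \<le> n\<close> i by (auto simp: j_def)
    have "cell_prob f q i + cell_prob f q j = (\<Sum>k\<in>{i, j}. cell_prob f q k)"
      using j by simp
    also have "\<dots> \<le> (\<Sum>k=1..n. cell_prob f q k)"
      using i j pos by (intro sum_mono2) (auto intro: less_imp_le)
    finally show ?thesis
      using sum pos[OF j(1)] by linarith
  qed
  then show "\<forall>i\<in>{1..n}. 0 < shannon_code f q i"
    using pos by (simp add: shannon_code_def)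
  have "(\<Sum>i=1..n. 2 powr (- shannon_code f q i)) = (\<Sum>i=1..n. cell_prob f q i)"
    using pos by (intro sum.cong) (simp_all add: shannon_code_def)
  then show "(\<Sum>i=1..n. 2 powr (- shannon_code f q i)) \<le> 1"
    using sum by simp
qed

lemma aoi_zw_ge_entropy:
  assumes nonneg: "\<And>i. i \<in> {1..n} \<Longrightarrow> 0 \<le> cell_prob f q i"
    and sum: "(\<Sum>i=1..n. cell_prob f q i) = 1" and l: "real_code n l"
  shows "3 / 2 * mean_len f n q (shannon_code f q) \<le> aoi_zw f n q l"
proof -
  define E where "E = mean_len f n q l"
  define E2 where "E2 = second_moment_len f n q l"
  have "mean_len f n q (shannon_code f q) = - (\<Sum>i=1..n. cell_prob f q i * log 2 (cell_prob f q i))"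
    by (simp add: mean_len_def shannon_code_def sum_negf)
  also have "\<dots> \<le> E"
    unfolding E_def mean_len_def
    by (rule entropy_le_mean_length[OF _ nonneg sum]) (use l in \<open>auto simp: real_code_def\<close>)
  finally have entropy: "mean_len f n q (shannon_code f q) \<le> E" .
  have "\<not> (\<forall>i\<in>{1..n}. cell_prob f q i = 0)"
    using sum by (metis sum.neutral zero_neq_one)
  then obtain j where j: "j \<in> {1..n}" "0 < cell_prob f q j"
    using nonneg by (force simp: less_le)
  have "0 < E"
    unfolding E_def mean_len_def
    using j l nonneg by (intro sum_pos2[of _ j]) (auto simp: real_code_def less_imp_le)
  moreover have "E^2 \<le> E2"
    unfolding E_def E2_def mean_len_def second_moment_len_def
    by (rule square_mean_le_mean_square[OF nonneg sum])
  ultimately have "E / 2 \<le> E2 / (2 * E)"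
    by (simp add: field_simps power2_eq_square)
  with entropy show ?thesis
    by (simp add: aoi_zw_def E_def E2_def)
qed

lemma aoi_opt_bounds:
  assumes pos: "\<And>i. i \<in> {1..n} \<Longrightarrow> 0 < cell_prob f q i"
    and sum: "(\<Sum>i=1..n. cell_prob f q i) = 1" and "2 \<le> n"
  shows "3 / 2 * mean_len f n q (shannon_code f q) \<le> aoi_opt f n q"
    and "aoi_opt f n q \<le> aoi_zw f n q (shannon_code f q)"
proof -
  have shannon: "real_code n (shannon_code f q)"
    using shannon_code_real_code[OF pos sum \<open>2 \<le> n\<close>] .
  have lower: "3 / 2 * mean_len f n q (shannon_code f q) \<le> aoi_zw f n q l" if "real_code n l" for l
    using aoi_zw_ge_entropy[OF _ sum that] pos by (simp add: less_imp_le)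
  show "3 / 2 * mean_len f n q (shannon_code f q) \<le> aoi_opt f n q"
    unfolding aoi_opt_def using shannon lower by (intro cINF_greatest) auto
  show "aoi_opt f n q \<le> aoi_zw f n q (shannon_code f q)"
    unfolding aoi_opt_def using shannon lower
    by (intro cINF_lower bdd_belowI[of _ "3 / 2 * mean_len f n q (shannon_code f q)"]) auto
qed

section \<open>The uniform quantizer\<close>

lemma uni_num_bounds:
  assumes "lo < hi" "0 < \<delta>"
  shows "1 \<le> uni_num lo hi \<delta>" and "real (uni_num lo hi \<delta>) * \<delta> - \<delta> < hi - lo"
    and "hi - lo \<le> real (uni_num lo hi \<delta>) * \<delta>"
proof -
  define t where "t = (hi - lo) / \<delta>"
  have t: "0 < t" "hi - lo = t * \<delta>"
    using assms by (simp_all add: t_def)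
  have n: "real (uni_num lo hi \<delta>) = of_int \<lceil>t\<rceil>"
    using \<open>0 < t\<close> by (simp add: uni_num_def t_def)
  have "0 < real (uni_num lo hi \<delta>)"
    using n \<open>0 < t\<close> by simp
  then show "1 \<le> uni_num lo hi \<delta>"
    by simp
  have "(of_int \<lceil>t\<rceil> - 1) * \<delta> < t * \<delta>"
    using assms by (intro mult_strict_right_mono) linarith+
  then show "real (uni_num lo hi \<delta>) * \<delta> - \<delta> < hi - lo"
    unfolding n t(2) by (simp add: algebra_simps)
  have "t * \<delta> \<le> of_int \<lceil>t\<rceil> * \<delta>"
    using assms by (intro mult_right_mono) simp_all
  then show "hi - lo \<le> real (uni_num lo hi \<delta>) * \<delta>"
    unfolding n t(2) .
qed

lemma uni_pts_lt_hi:
  assumes "lo < hi" "0 < \<delta>" "i < uni_num lo hi \<delta>"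
  shows "uni_pts lo \<delta> i < hi"
proof -
  have "real i * \<delta> \<le> (real (uni_num lo hi \<delta>) - 1) * \<delta>"
    using assms by (intro mult_right_mono) auto
  then show ?thesis
    using uni_num_bounds(2)[OF assms(1,2)] by (simp add: uni_pts_def algebra_simps)
qed

lemma eventually_uni_num_ge_2:
  assumes "lo < hi"
  shows "\<forall>\<^sub>F \<delta> in at_right 0. 2 \<le> uni_num lo hi \<delta>"
proof -
  have "\<forall>\<^sub>F \<delta> in at_right 0. \<delta> \<in> {0<..<hi - lo}"
    using assms by (intro eventually_at_right_real) simp
  then show ?thesis
  proof (rule eventually_mono)
    fix \<delta> :: real assume "\<delta> \<in> {0<..<hi - lo}"
    then have \<delta>: "0 < \<delta>" "\<delta> < hi - lo" by auto
    then have "1 * \<delta> < real (uni_num lo hi \<delta>) * \<delta>"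
      using uni_num_bounds(3)[OF assms \<delta>(1)] by linarith
    then have "1 < real (uni_num lo hi \<delta>)"
      using \<delta> by (simp only: mult_less_cancel_right)
    then show "2 \<le> uni_num lo hi \<delta>"
      by simp
  qed
qed

lemma uni_pts_diff: "1 \<le> i \<Longrightarrow> uni_pts lo \<delta> i - uni_pts lo \<delta> (i - 1) = \<delta>"
  by (simp add: uni_pts_def of_nat_diff algebra_simps)

lemma uni_mid_eq: "1 \<le> i \<Longrightarrow> uni_mid lo \<delta> i = (uni_pts lo \<delta> (i - 1) + uni_pts lo \<delta> i) / 2"
  by (simp add: uni_mid_def uni_pts_def of_nat_diff field_simps)

lemma mono_uni_pts: "0 \<le> \<delta> \<Longrightarrow> mono (uni_pts lo \<delta>)"
  by (auto simp: mono_def uni_pts_def intro: mult_right_mono)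

section \<open>Continuous densities on a compact interval\<close>

locale interval_density =
  fixes f :: "real \<Rightarrow> real" and lo hi :: real
  assumes f_measurable: "f \<in> borel_measurable lborel"
    and nonneg: "\<And>x. 0 \<le> f x"
    and integrable: "integrable lborel f"
    and total: "(\<integral>x. f x \<partial>lborel) = 1"
    and lo_less_hi: "lo < hi"
    and zero_outside: "\<And>x. x \<notin> {lo..hi} \<Longrightarrow> f x = 0"
    and support: "closure {x. f x \<noteq> 0} = {lo..hi}"
    and continuous: "continuous_on {lo..hi} f"
begin

abbreviation N :: "real \<Rightarrow> nat" where
  "N \<delta> \<equiv> uni_num lo hi \<delta>"

abbreviation p :: "real \<Rightarrow> nat \<Rightarrow> real" where
  "p \<delta> i \<equiv> cell_prob f (uni_pts lo \<delta>) i"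

abbreviation cell :: "real \<Rightarrow> nat \<Rightarrow> real set" where
  "cell \<delta> i \<equiv> {uni_pts lo \<delta> (i - 1)..uni_pts lo \<delta> i}"

lemma integrable_on_f: "f integrable_on {a..b}"
  using continuous zero_outside by (rule integrable_on_of_continuous_on_support)

lemma density_bounded: "\<exists>M. \<forall>x. f x \<le> M"
proof -
  have "bounded (f ` {lo..hi})"
    using continuous by (intro compact_imp_bounded compact_continuous_image) auto
  then obtain B where "\<forall>y \<in> f ` {lo..hi}. norm y \<le> B"
    by (auto simp: bounded_iff)
  then have "f x \<le> \<bar>B\<bar>" for x
    using zero_outside[of x] by (cases "x \<in> {lo..hi}") force+
  then show ?thesis by blast
qed

lemma set_integrable_square_mult:
  "set_integrable lborel {a..b} (\<lambda>x. (x - c)^2 * f x)"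
  unfolding set_integrable_def
proof (rule Bochner_Integration.integrable_bound)
  define K where "K = (\<bar>a - c\<bar> + \<bar>b - c\<bar>)^2"
  show "integrable lborel (\<lambda>x. K * f x)"
    using integrable by simp
  show "(\<lambda>x. indicator {a..b} x *\<^sub>R ((x - c)^2 * f x)) \<in> borel_measurable lborel"
    using f_measurable by measurable
  have "(x - c)^2 \<le> K" if "x \<in> {a..b}" for x
  proof -
    have "\<bar>x - c\<bar> \<le> \<bar>a - c\<bar> + \<bar>b - c\<bar>"
      using that by auto
    then show ?thesis
      unfolding K_def by (metis abs_ge_zero power2_abs power_mono)
  qed
  then show "AE x in lborel. norm (indicator {a..b} x *\<^sub>R ((x - c)^2 * f x)) \<le> norm (K * f x)"
    using nonneg by (auto simp: indicator_def abs_mult K_def intro!: mult_right_mono)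
qed

lemma set_integrable_f: "set_integrable lborel {a..b} f"
  unfolding set_integrable_def by (intro integrable_mult_indicator integrable) simp

lemma cell_prob_eq_integral: "p \<delta> i = integral (cell \<delta> i) f"
  unfolding cell_prob_def by (rule set_borel_integral_eq_integral(2)[OF set_integrable_f])

lemma integral_f_eq_1: "integral {lo..hi} f = 1"
proof -
  have "(LINT x:{lo..hi}|lborel. f x) = (\<integral>x. f x \<partial>lborel)"
    unfolding set_lebesgue_integral_def
    by (rule Bochner_Integration.integral_cong) (use zero_outside in \<open>auto simp: indicator_def\<close>)
  then show ?thesis
    using total set_borel_integral_eq_integral(2)[OF set_integrable_f] by simp
qed

lemma sum_integral_cells:
  fixes w :: "real \<Rightarrow> real"
  assumes "continuous_on {lo..hi} w" "\<And>x. x \<notin> {lo..hi} \<Longrightarrow> w x = 0" "0 < \<delta>"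
  shows "(\<Sum>i=1..N \<delta>. integral (cell \<delta> i) w) = integral {lo..hi} w"
proof -
  have "w integrable_on {a..b}" for a b
    using assms(1,2) by (rule integrable_on_of_continuous_on_support)
  then have "(\<Sum>i=1..N \<delta>. integral (cell \<delta> i) w) = integral {lo..uni_pts lo \<delta> (N \<delta>)} w"
    using sum_integral_consecutive[OF mono_uni_pts] assms(3) by (simp add: uni_pts_def)
  also have "\<dots> = integral {lo..hi} w"
    using uni_num_bounds(3)[OF lo_less_hi assms(3)] lo_less_hi
    by (intro integral_eq_of_continuous_on_support assms(1,2)) (auto simp: uni_pts_def)
  finally show ?thesis .
qed

lemma sum_cell_prob:
  assumes "0 < \<delta>"
  shows "(\<Sum>i=1..N \<delta>. p \<delta> i) = 1"
  using sum_integral_cells[OF continuous zero_outside assms] integral_f_eq_1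
  by (simp add: cell_prob_eq_integral)

lemma cell_prob_nonneg: "0 \<le> p \<delta> i"
  unfolding cell_prob_eq_integral using integrable_on_f nonneg by (rule integral_nonneg)

lemma cell_prob_le:
  assumes "\<And>x. f x \<le> M" "0 \<le> \<delta>" "1 \<le> i"
  shows "p \<delta> i \<le> M * \<delta>"
proof -
  have len: "uni_pts lo \<delta> i - uni_pts lo \<delta> (i - 1) = \<delta>"
    using assms(3) by (rule uni_pts_diff)
  then have "uni_pts lo \<delta> (i - 1) \<le> uni_pts lo \<delta> i"
    using assms(2) by linarith
  then have "\<bar>integral (cell \<delta> i) f - (uni_pts lo \<delta> i - uni_pts lo \<delta> (i - 1)) * 0\<bar>
        \<le> M * (uni_pts lo \<delta> i - uni_pts lo \<delta> (i - 1))"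
    using assms nonneg integrable_on_f by (intro abs_integral_diff_const_le) auto
  then show ?thesis
    unfolding len cell_prob_eq_integral by simp
qed

lemma cell_average_mem:
  assumes "\<And>x. f x \<le> M" "0 < \<delta>" "1 \<le> i"
  shows "p \<delta> i / \<delta> \<in> {0..M}"
  using cell_prob_nonneg[of \<delta> i] cell_prob_le[OF assms(1) _ assms(3), of \<delta>] assms(2)
  by (auto simp: field_simps)

lemma abs_cell_average_diff_le:
  assumes "0 < \<delta>" "1 \<le> i" "\<And>x. x \<in> cell \<delta> i \<Longrightarrow> \<bar>f x - v\<bar> \<le> e"
  shows "\<bar>p \<delta> i / \<delta> - v\<bar> \<le> e"
proof -
  have len: "uni_pts lo \<delta> i - uni_pts lo \<delta> (i - 1) = \<delta>"
    using assms(2) by (rule uni_pts_diff)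
  have "\<bar>integral (cell \<delta> i) f - (uni_pts lo \<delta> i - uni_pts lo \<delta> (i - 1)) * v\<bar>
        \<le> e * (uni_pts lo \<delta> i - uni_pts lo \<delta> (i - 1))"
    using len assms by (intro abs_integral_diff_const_le integrable_on_f) auto
  then show ?thesis
    unfolding len using assms(1) by (simp add: cell_prob_eq_integral abs_le_iff field_simps)
qed

lemma cell_prob_pos:
  assumes \<delta>: "0 < \<delta>" and i: "i \<in> {1..N \<delta>}"
  shows "0 < p \<delta> i"
proof (rule ccontr)
  assume "\<not> 0 < p \<delta> i"
  then have zero: "integral (cell \<delta> i) f = 0"
    using cell_prob_nonneg[of \<delta> i] by (simp add: cell_prob_eq_integral)
  define a where "a = uni_pts lo \<delta> (i - 1)"
  define b where "b = min (uni_pts lo \<delta> i) hi"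
  have "a < hi"
    unfolding a_def using i by (intro uni_pts_lt_hi lo_less_hi \<delta>) auto
  moreover have "a < uni_pts lo \<delta> i"
    using uni_pts_diff[of i lo \<delta>] i \<delta> by (simp add: a_def)
  ultimately have ab: "a < b" "lo \<le> a" "b \<le> hi" "{a..b} \<subseteq> cell \<delta> i"
    using \<delta> by (auto simp: a_def b_def uni_pts_def)
  have "integral {a..b} f \<le> integral (cell \<delta> i) f"
    using ab(4) nonneg integrable_on_f by (intro integral_subset_le) auto
  then have "(f has_integral 0) (cbox a b)"
    using zero integral_nonneg[OF integrable_on_f, of a b] nonneg integrable_on_f[of a b]
    by (simp add: has_integral_integral antisym)
  then have "f x = 0" if "x \<in> {a..b}" for x
    using ab that nonneg continuous_on_subset[OF continuous, of "{a..b}"]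
    by (intro has_integral_0_cbox_imp_0[of a b f]) auto
  then have "{x. f x \<noteq> 0} \<subseteq> - {a<..<b}"
    by auto
  then have "closure {x. f x \<noteq> 0} \<subseteq> - {a<..<b}"
    by (intro closure_minimal) auto
  moreover have "(a + b) / 2 \<in> {lo..hi} \<inter> {a<..<b}"
    using ab by auto
  ultimately show False
    using support by blast
qed

lemma cell_subset:
  assumes "0 < \<delta>" "1 \<le> i" "i < N \<delta>"
  shows "cell \<delta> i \<subseteq> {lo..hi}"
  using uni_pts_lt_hi[OF lo_less_hi assms(1,3)] assms(1) by (auto simp: uni_pts_def)

(* The last cell may stick out beyond hi, where f jumps to 0, so only the inner
   cells are required to have cell averages close to f. *)
definition inner_cells_close :: "(real \<Rightarrow> real) \<Rightarrow> real \<Rightarrow> real \<Rightarrow> bool" where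
  "inner_cells_close \<psi> e \<delta> \<longleftrightarrow>
     (\<forall>i y. 1 \<le> i \<longrightarrow> i < N \<delta> \<longrightarrow> y \<in> cell \<delta> i \<longrightarrow> \<bar>\<psi> (f y) - \<psi> (p \<delta> i / \<delta>)\<bar> \<le> e)"

lemma eventually_inner_cells_close:
  fixes \<psi> :: "real \<Rightarrow> real"
  assumes \<psi>: "continuous_on {0..} \<psi>" and "0 < e"
  shows "\<forall>\<^sub>F \<delta> in at_right 0. inner_cells_close \<psi> e \<delta>"
proof -
  obtain M where M: "\<And>x. f x \<le> M"
    using density_bounded by blast
  have "uniformly_continuous_on {0..M} \<psi>"
    using \<psi> by (intro compact_uniformly_continuous continuous_on_subset[OF \<psi>]) auto
  then obtain \<eta> where \<eta>: "0 < \<eta>"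
    "\<And>s t. s \<in> {0..M} \<Longrightarrow> t \<in> {0..M} \<Longrightarrow> dist t s < \<eta> \<Longrightarrow> dist (\<psi> t) (\<psi> s) < e"
    using \<open>0 < e\<close> unfolding uniformly_continuous_on_def by metis
  have "uniformly_continuous_on {lo..hi} f"
    using continuous by (intro compact_uniformly_continuous) auto
  moreover have "0 < \<eta> / 2"
    using \<eta>(1) by simp
  ultimately obtain d where d: "0 < d"
    "\<And>x y. x \<in> {lo..hi} \<Longrightarrow> y \<in> {lo..hi} \<Longrightarrow> dist y x < d \<Longrightarrow> dist (f y) (f x) < \<eta> / 2"
    unfolding uniformly_continuous_on_def by metis
  have "\<forall>\<^sub>F \<delta> in at_right 0. \<delta> \<in> {0<..<d}"
    using d(1) by (rule eventually_at_right_real)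
  then show ?thesis
    unfolding inner_cells_close_def
  proof (rule eventually_mono, intro allI impI)
    fix \<delta> i y assume \<delta>: "\<delta> \<in> {0<..<d}" and i: "1 \<le> i" "i < N \<delta>" and y: "y \<in> cell \<delta> i"
    have len: "uni_pts lo \<delta> i - uni_pts lo \<delta> (i - 1) = \<delta>"
      using i(1) by (rule uni_pts_diff)
    have sub: "cell \<delta> i \<subseteq> {lo..hi}"
      using \<delta> i by (intro cell_subset) auto
    have "\<bar>f x - f y\<bar> \<le> \<eta> / 2" if "x \<in> cell \<delta> i" for x
    proof -
      have "dist x y < d"
        using that y len \<delta> by (auto simp: dist_real_def)
      then show ?thesis
        using d(2)[of y x] that y sub by (auto simp: dist_real_def)
    qed
    then have "\<bar>p \<delta> i / \<delta> - f y\<bar> \<le> \<eta> / 2"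
      using \<delta> i(1) by (intro abs_cell_average_diff_le) auto
    moreover have "p \<delta> i / \<delta> \<in> {0..M}" "f y \<in> {0..M}"
      using cell_average_mem[OF M _ i(1)] \<delta> M nonneg by auto
    ultimately have "dist (\<psi> (f y)) (\<psi> (p \<delta> i / \<delta>)) < e"
      using \<eta>(1) by (intro \<eta>(2)) (auto simp: dist_real_def abs_minus_commute)
    then show "\<bar>\<psi> (f y) - \<psi> (p \<delta> i / \<delta>)\<bar> \<le> e"
      by (simp add: dist_real_def)
  qed
qed

definition cell_sum :: "(real \<Rightarrow> real) \<Rightarrow> real \<Rightarrow> real" where
  "cell_sum \<psi> \<delta> = (\<Sum>i=1..N \<delta>. \<delta> * \<psi> (p \<delta> i / \<delta>))"

lemma cell_sum_error_le:
  fixes \<psi> :: "real \<Rightarrow> real"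
  assumes \<psi>: "continuous_on {0..} \<psi>" "\<psi> 0 = 0"
    and M: "\<And>x. f x \<le> M" and B: "\<And>t. t \<in> {0..M} \<Longrightarrow> \<bar>\<psi> t\<bar> \<le> B"
    and \<delta>: "0 < \<delta>" "\<delta> \<le> 1" and "0 \<le> e" and close: "inner_cells_close \<psi> e \<delta>"
  shows "\<bar>cell_sum \<psi> \<delta> - integral {lo..hi} (\<lambda>x. \<psi> (f x))\<bar> \<le> (hi - lo + 1) * e + 2 * B * \<delta>"
proof -
  define w where "w = (\<lambda>x. \<psi> (f x))"
  have w: "continuous_on {lo..hi} w" "\<And>x. x \<notin> {lo..hi} \<Longrightarrow> w x = 0"
    using zero_outside \<psi>(2) nonneg
    by (auto simp: w_def intro!: continuous_on_compose2[OF \<psi>(1) continuous])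
  have cell_error: "\<bar>\<delta> * \<psi> (p \<delta> i / \<delta>) - integral (cell \<delta> i) w\<bar>
      \<le> (e + (if i = N \<delta> then 2 * B else 0)) * \<delta>"
    if i: "i \<in> {1..N \<delta>}" for i
  proof -
    have len: "uni_pts lo \<delta> i - uni_pts lo \<delta> (i - 1) = \<delta>"
      using i by (intro uni_pts_diff) simp
    have "p \<delta> i / \<delta> \<in> {0..M}"
      using cell_average_mem[OF M \<delta>(1)] i by simp
    then have "\<bar>w x - \<psi> (p \<delta> i / \<delta>)\<bar> \<le> e + (if i = N \<delta> then 2 * B else 0)"
      if "x \<in> cell \<delta> i" for x
      using close that i B[of "f x"] B[of "p \<delta> i / \<delta>"] M[of x] nonneg[of x] \<open>0 \<le> e\<close>
      by (auto simp: w_def inner_cells_close_def)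
    then have "\<bar>integral (cell \<delta> i) w - (uni_pts lo \<delta> i - uni_pts lo \<delta> (i - 1)) * \<psi> (p \<delta> i / \<delta>)\<bar>
               \<le> (e + (if i = N \<delta> then 2 * B else 0)) * (uni_pts lo \<delta> i - uni_pts lo \<delta> (i - 1))"
      using len \<delta> w by (intro abs_integral_diff_const_le integrable_on_of_continuous_on_support) auto
    then show ?thesis
      unfolding len by (simp add: abs_minus_commute)
  qed
  have "(\<Sum>i=1..N \<delta>. integral (cell \<delta> i) w) = integral {lo..hi} w"
    by (rule sum_integral_cells) (use w \<delta> in auto)
  then have "\<bar>cell_sum \<psi> \<delta> - integral {lo..hi} w\<bar>
        = \<bar>\<Sum>i=1..N \<delta>. \<delta> * \<psi> (p \<delta> i / \<delta>) - integral (cell \<delta> i) w\<bar>"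
    unfolding cell_sum_def by (simp only: sum_subtractf)
  also have "\<dots> \<le> (\<Sum>i=1..N \<delta>. (e + (if i = N \<delta> then 2 * B else 0)) * \<delta>)"
    by (intro order_trans[OF sum_abs] sum_mono cell_error)
  also have "\<dots> = real (N \<delta>) * \<delta> * e + 2 * B * \<delta>"
    using uni_num_bounds(1)[OF lo_less_hi \<delta>(1)]
    by (simp add: distrib_right sum.distrib sum.delta if_distrib[of "\<lambda>x. x * \<delta>"] cong: if_cong)
  also have "\<dots> \<le> (hi - lo + 1) * e + 2 * B * \<delta>"
    using uni_num_bounds(2)[OF lo_less_hi \<delta>(1)] \<delta> \<open>0 \<le> e\<close> by (intro add_right_mono mult_right_mono) auto
  finally show ?thesis
    by (simp add: w_def)
qed

lemma tendsto_cell_sum: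
  fixes \<psi> :: "real \<Rightarrow> real"
  assumes \<psi>: "continuous_on {0..} \<psi>" "\<psi> 0 = 0"
  shows "(cell_sum \<psi> \<longlongrightarrow> integral {lo..hi} (\<lambda>x. \<psi> (f x))) (at_right 0)"
proof (rule tendstoI)
  fix \<epsilon> :: real assume "0 < \<epsilon>"
  obtain M where M: "\<And>x. f x \<le> M"
    using density_bounded by blast
  have "bounded (\<psi> ` {0..M})"
    using \<psi>(1) by (intro compact_imp_bounded compact_continuous_image continuous_on_subset[OF \<psi>(1)]) auto
  then obtain B where "\<forall>y \<in> \<psi> ` {0..M}. norm y \<le> B"
    unfolding bounded_iff by blast
  then have B: "\<bar>\<psi> t\<bar> \<le> \<bar>B\<bar>" if "t \<in> {0..M}" for t
    using that by force
  define e where "e = \<epsilon> / (2 * (hi - lo + 1))"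
  have "0 < e" "(hi - lo + 1) * e = \<epsilon> / 2"
    using \<open>0 < \<epsilon>\<close> lo_less_hi by (simp_all add: e_def field_simps)
  have "\<forall>\<^sub>F \<delta> in at_right 0. \<delta> \<in> {0<..<min 1 (\<epsilon> / (4 * (\<bar>B\<bar> + 1)))}"
    using \<open>0 < \<epsilon>\<close> by (intro eventually_at_right_real) simp
  with eventually_inner_cells_close[OF \<psi>(1) \<open>0 < e\<close>]
  show "\<forall>\<^sub>F \<delta> in at_right 0. dist (cell_sum \<psi> \<delta>) (integral {lo..hi} (\<lambda>x. \<psi> (f x))) < \<epsilon>"
  proof eventually_elim
    case (elim \<delta>)
    then have \<delta>: "0 < \<delta>" "\<delta> \<le> 1" "\<delta> * (4 * (\<bar>B\<bar> + 1)) < \<epsilon>"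
      by (auto simp: less_divide_eq)
    then have "2 * \<bar>B\<bar> * \<delta> < \<epsilon> / 2"
      by (simp add: algebra_simps)
    with cell_sum_error_le[OF \<psi> M B \<delta>(1,2) _ elim(1)] \<open>0 < e\<close> \<open>(hi - lo + 1) * e = \<epsilon> / 2\<close>
    show ?case
      by (simp add: dist_real_def)
  qed
qed

lemma integrable_on_square_mult: "(\<lambda>x. (x - c)^2 * f x) integrable_on {a..b}"
  using set_integrable_square_mult by (rule set_borel_integral_eq_integral(1))

lemma distortion_eq_sum_integral:
  "distortion f (N \<delta>) (uni_pts lo \<delta>) (uni_mid lo \<delta>)
     = (\<Sum>i=1..N \<delta>. integral (cell \<delta> i) (\<lambda>x. (x - uni_mid lo \<delta> i)^2 * f x))"
  unfolding distortion_def
  by (intro sum.cong refl set_borel_integral_eq_integral(2) set_integrable_square_mult)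

lemma distortion_le:
  assumes "0 < \<delta>"
  shows "distortion f (N \<delta>) (uni_pts lo \<delta>) (uni_mid lo \<delta>) \<le> \<delta>^2 / 4"
proof -
  have "integral (cell \<delta> i) (\<lambda>x. (x - uni_mid lo \<delta> i)^2 * f x) \<le> integral (cell \<delta> i) (\<lambda>x. \<delta>^2 / 4 * f x)"
    if i: "i \<in> {1..N \<delta>}" for i
  proof (intro integral_le integrable_on_square_mult integrable_on_mult_right integrable_on_f ballI)
    fix x assume x: "x \<in> cell \<delta> i"
    have "\<bar>x - uni_mid lo \<delta> i\<bar> \<le> \<delta> / 2"
      using x uni_pts_diff[of i lo \<delta>] uni_mid_eq[of i lo \<delta>] i by (intro abs_leI) auto
    then have "(x - uni_mid lo \<delta> i)^2 \<le> (\<delta> / 2)^2"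
      by (metis abs_ge_zero power2_abs power_mono)
    then have "(x - uni_mid lo \<delta> i)^2 \<le> \<delta>^2 / 4"
      by (simp add: power_divide)
    then show "(x - uni_mid lo \<delta> i)^2 * f x \<le> \<delta>^2 / 4 * f x"
      using nonneg[of x] by (rule mult_right_mono)
  qed
  then have "distortion f (N \<delta>) (uni_pts lo \<delta>) (uni_mid lo \<delta>) \<le> (\<Sum>i=1..N \<delta>. \<delta>^2 / 4 * p \<delta> i)"
    unfolding distortion_eq_sum_integral cell_prob_eq_integral by (intro sum_mono) simp
  also have "\<dots> = \<delta>^2 / 4 * (\<Sum>i=1..N \<delta>. p \<delta> i)"
    by (rule sum_distrib_left[symmetric])
  also have "\<dots> = \<delta>^2 / 4"
    using sum_cell_prob[OF assms] by simp
  finally show ?thesis .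
qed

lemma integral_cell_distortion_ge:
  assumes M: "\<And>x. f x \<le> M" and \<delta>: "0 < \<delta>" and "0 \<le> e"
    and close: "inner_cells_close (\<lambda>t. t) e \<delta>" and i: "i \<in> {1..N \<delta>}"
  shows "(p \<delta> i / \<delta> - e - (if i = N \<delta> then M else 0)) * \<delta>^3 / 12
      \<le> integral (cell \<delta> i) (\<lambda>x. (x - uni_mid lo \<delta> i)^2 * f x)"
proof -
  have len: "uni_pts lo \<delta> i - uni_pts lo \<delta> (i - 1) = \<delta>"
    using i by (intro uni_pts_diff) simp
  have "p \<delta> i / \<delta> \<le> M"
    using cell_average_mem[OF M \<delta>] i by simp
  (* On the last cell the average says nothing about f; there f \<ge> 0 \<ge> p/\<delta> - M suffices. *)
  have "p \<delta> i / \<delta> - e - (if i = N \<delta> then M else 0) \<le> f x" if x: "x \<in> cell \<delta> i" for x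
  proof (cases "i = N \<delta>")
    case True
    then show ?thesis
      using \<open>p \<delta> i / \<delta> \<le> M\<close> \<open>0 \<le> e\<close> nonneg[of x] by simp
  next
    case False
    then have "\<bar>f x - p \<delta> i / \<delta>\<bar> \<le> e"
      using close i x by (auto simp: inner_cells_close_def)
    with False show ?thesis
      by simp
  qed
  then show ?thesis
    using integral_midpoint_deviation_ge[OF _ integrable_on_square_mult, of "uni_pts lo \<delta> (i - 1)" "uni_pts lo \<delta> i"]
      len \<delta> i by (simp add: uni_mid_eq)
qed

lemma distortion_ge:
  assumes M: "\<And>x. f x \<le> M" and \<delta>: "0 < \<delta>" and "0 \<le> e"
    and close: "inner_cells_close (\<lambda>t. t) e \<delta>"
  shows "\<delta>^2 / 12 * (1 - real (N \<delta>) * \<delta> * e - M * \<delta>) \<le> distortion f (N \<delta>) (uni_pts lo \<delta>) (uni_mid lo \<delta>)"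
proof -
  have "\<delta>^2 / 12 * (1 - real (N \<delta>) * \<delta> * e - M * \<delta>)
      = \<delta>^2 / 12 * (\<Sum>i=1..N \<delta>. p \<delta> i) - real (N \<delta>) * (\<delta>^3 / 12 * e) - \<delta>^3 / 12 * M"
    using sum_cell_prob[OF \<delta>] by (simp add: field_simps power2_eq_square power3_eq_cube)
  also have "\<dots> = (\<Sum>i=1..N \<delta>. \<delta>^2 / 12 * p \<delta> i - \<delta>^3 / 12 * e - (if i = N \<delta> then \<delta>^3 / 12 * M else 0))"
    using uni_num_bounds(1)[OF lo_less_hi \<delta>]
    by (simp add: sum_subtractf sum_distrib_left sum.delta)
  also have "\<dots> = (\<Sum>i=1..N \<delta>. (p \<delta> i / \<delta> - e - (if i = N \<delta> then M else 0)) * \<delta>^3 / 12)"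
    using \<delta> by (intro sum.cong) (auto simp: field_simps power2_eq_square power3_eq_cube)
  also have "\<dots> \<le> distortion f (N \<delta>) (uni_pts lo \<delta>) (uni_mid lo \<delta>)"
    unfolding distortion_eq_sum_integral
    using assms by (intro sum_mono integral_cell_distortion_ge)
  finally show ?thesis .
qed

lemma eventually_distortion_ge:
  "\<forall>\<^sub>F \<delta> in at_right 0. \<delta>^2 / 24 \<le> distortion f (N \<delta>) (uni_pts lo \<delta>) (uni_mid lo \<delta>)"
proof -
  obtain M where M: "\<And>x. f x \<le> M"
    using density_bounded by blast
  define e where "e = 1 / (4 * (hi - lo + 1))"
  have "0 < e" "(hi - lo + 1) * e = 1 / 4"
    using lo_less_hi by (simp_all add: e_def)
  have "\<forall>\<^sub>F \<delta> in at_right 0. \<delta> \<in> {0<..<min 1 (1 / (4 * (\<bar>M\<bar> + 1)))}"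
    by (intro eventually_at_right_real) simp
  with eventually_inner_cells_close[OF continuous_on_id \<open>0 < e\<close>]
  show ?thesis
  proof eventually_elim
    case (elim \<delta>)
    then have \<delta>: "0 < \<delta>" "\<delta> < 1" "\<delta> < 1 / (4 * (\<bar>M\<bar> + 1))"
      by (simp_all only: greaterThanLessThan_iff min_less_iff_conj)
    have "0 < 4 * (\<bar>M\<bar> + 1)"
      by (simp add: add_nonneg_pos)
    then have "\<delta> * (4 * (\<bar>M\<bar> + 1)) < 1"
      using \<delta>(3) by (simp only: pos_less_divide_eq)
    moreover have "M * \<delta> \<le> (\<bar>M\<bar> + 1) * \<delta>"
      using \<delta>(1) by (intro mult_right_mono) auto
    moreover have "real (N \<delta>) * \<delta> * e \<le> (hi - lo + 1) * e"
      using uni_num_bounds(2)[OF lo_less_hi \<delta>(1)] \<delta> \<open>0 < e\<close> by (intro mult_right_mono) auto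
    ultimately have "\<delta>^2 / 12 * (1 / 2) \<le> \<delta>^2 / 12 * (1 - real (N \<delta>) * \<delta> * e - M * \<delta>)"
      using \<open>(hi - lo + 1) * e = 1 / 4\<close> by (intro mult_left_mono) (auto simp: algebra_simps)
    also have "\<dots> \<le> distortion f (N \<delta>) (uni_pts lo \<delta>) (uni_mid lo \<delta>)"
      using elim(1) \<delta>(1) \<open>0 < e\<close> by (intro distortion_ge M) auto
    finally show ?case
      by simp
  qed
qed

lemma tendsto_log_distortion_ratio:
  "((\<lambda>\<delta>. log 2 (distortion f (N \<delta>) (uni_pts lo \<delta>) (uni_mid lo \<delta>)) / log 2 \<delta>) \<longlongrightarrow> 2) (at_right 0)"
proof -
  have "\<forall>\<^sub>F \<delta> in at_right 0. 1 / 24 * \<delta> ^ 2 \<le> distortion f (N \<delta>) (uni_pts lo \<delta>) (uni_mid lo \<delta>)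
                              \<and> distortion f (N \<delta>) (uni_pts lo \<delta>) (uni_mid lo \<delta>) \<le> 1 / 4 * \<delta> ^ 2"
    using eventually_distortion_ge eventually_at_right_less[of 0]
    by eventually_elim (use distortion_le in auto)
  from tendsto_log_ratio_power_bounds[OF _ _ this] show ?thesis
    by simp
qed

lemma shannon_code_moments:
  assumes "0 < \<delta>"
  defines "A \<equiv> cell_sum (\<lambda>t. t * log 2 t) \<delta>" and "B \<equiv> cell_sum (\<lambda>t. t * (log 2 t)^2) \<delta>"
  shows "mean_len f (N \<delta>) (uni_pts lo \<delta>) (shannon_code f (uni_pts lo \<delta>)) = - A - log 2 \<delta>"
    and "second_moment_len f (N \<delta>) (uni_pts lo \<delta>) (shannon_code f (uni_pts lo \<delta>))
           = B + 2 * log 2 \<delta> * A + (log 2 \<delta>)^2"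
proof -
  let ?L = "log 2 \<delta>"
  have split: "log 2 (p \<delta> i) = log 2 (p \<delta> i / \<delta>) + ?L" "\<delta> * (p \<delta> i / \<delta>) = p \<delta> i"
    if "i \<in> {1..N \<delta>}" for i
    using cell_prob_pos[OF assms(1) that] assms(1) by (simp_all add: log_divide)
  have "mean_len f (N \<delta>) (uni_pts lo \<delta>) (shannon_code f (uni_pts lo \<delta>))
        = (\<Sum>i=1..N \<delta>. - (\<delta> * (p \<delta> i / \<delta> * log 2 (p \<delta> i / \<delta>))) - ?L * p \<delta> i)"
    unfolding mean_len_def shannon_code_def using split assms(1)
    by (intro sum.cong) (simp_all add: algebra_simps)
  also have "\<dots> = - A - ?L"
    using sum_cell_prob[OF assms(1)]
    by (simp add: A_def cell_sum_def sum_subtractf sum_negf sum_distrib_left[symmetric])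
  finally show "mean_len f (N \<delta>) (uni_pts lo \<delta>) (shannon_code f (uni_pts lo \<delta>)) = - A - ?L" .
  have "second_moment_len f (N \<delta>) (uni_pts lo \<delta>) (shannon_code f (uni_pts lo \<delta>))
        = (\<Sum>i=1..N \<delta>. \<delta> * (p \<delta> i / \<delta> * (log 2 (p \<delta> i / \<delta>))^2)
              + 2 * ?L * (\<delta> * (p \<delta> i / \<delta> * log 2 (p \<delta> i / \<delta>))) + ?L^2 * p \<delta> i)"
    unfolding second_moment_len_def shannon_code_def using split assms(1)
    by (intro sum.cong) (simp_all add: power2_eq_square algebra_simps)
  also have "\<dots> = B + 2 * ?L * A + ?L^2"
    using sum_cell_prob[OF assms(1)]
    by (simp add: A_def B_def cell_sum_def sum.distrib sum_distrib_left[symmetric])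
  finally show "second_moment_len f (N \<delta>) (uni_pts lo \<delta>) (shannon_code f (uni_pts lo \<delta>))
           = B + 2 * ?L * A + ?L^2" .
qed

lemma aoi_opt_offset_bounds:
  assumes \<delta>: "0 < \<delta>" "2 \<le> N \<delta>"
  defines "A \<equiv> cell_sum (\<lambda>t. t * log 2 t) \<delta>" and "B \<equiv> cell_sum (\<lambda>t. t * (log 2 t)^2) \<delta>"
    and "H \<equiv> - cell_sum (\<lambda>t. t * log 2 t) \<delta> - log 2 \<delta>"
  assumes "0 < H"
  shows "- 3 / 2 * A \<le> aoi_opt f (N \<delta>) (uni_pts lo \<delta>) + 3 / 2 * log 2 \<delta>"
    and "aoi_opt f (N \<delta>) (uni_pts lo \<delta>) + 3 / 2 * log 2 \<delta> \<le> - 3 / 2 * A + (B - A^2) / (2 * H)"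
proof -
  note bounds = aoi_opt_bounds[OF cell_prob_pos[OF \<delta>(1)] sum_cell_prob[OF \<delta>(1)] \<delta>(2)]
  note moments = shannon_code_moments[OF \<delta>(1)]
  show "- 3 / 2 * A \<le> aoi_opt f (N \<delta>) (uni_pts lo \<delta>) + 3 / 2 * log 2 \<delta>"
    using bounds(1) unfolding moments A_def by (simp add: algebra_simps)
  have "aoi_zw f (N \<delta>) (uni_pts lo \<delta>) (shannon_code f (uni_pts lo \<delta>)) = 3 / 2 * H + (B - A^2) / (2 * H)"
    using \<open>0 < H\<close> unfolding aoi_zw_def moments A_def B_def H_def by (simp add: field_simps power2_eq_square)
  then show "aoi_opt f (N \<delta>) (uni_pts lo \<delta>) + 3 / 2 * log 2 \<delta> \<le> - 3 / 2 * A + (B - A^2) / (2 * H)"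
    using bounds(2) by (simp add: A_def H_def algebra_simps)
qed

lemma tendsto_aoi_opt_offset:
  "((\<lambda>\<delta>. aoi_opt f (N \<delta>) (uni_pts lo \<delta>) + 3 / 2 * log 2 \<delta>)
     \<longlongrightarrow> - 3 / 2 * integral {lo..hi} (\<lambda>x. f x * log 2 (f x))) (at_right 0)"
proof -
  define A where "A = cell_sum (\<lambda>t. t * log 2 t)"
  define B where "B = cell_sum (\<lambda>t. t * (log 2 t)^2)"
  define H where "H \<delta> = - A \<delta> - log 2 \<delta>" for \<delta>
  define a where "a = integral {lo..hi} (\<lambda>x. f x * log 2 (f x))"
  have A: "(A \<longlongrightarrow> a) (at_right 0)"
    unfolding A_def a_def by (rule tendsto_cell_sum[OF continuous_on_mult_log]) simp
  have B: "(B \<longlongrightarrow> integral {lo..hi} (\<lambda>x. f x * (log 2 (f x))^2)) (at_right 0)"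
    unfolding B_def by (rule tendsto_cell_sum[OF continuous_on_mult_log_squared]) simp
  have "filterlim (\<lambda>\<delta>. - log 2 \<delta>) at_top (at_right 0)"
    using filterlim_log_at_bot_at_right_0[of 2] by (simp add: filterlim_uminus_at_bot)
  from filterlim_tendsto_add_at_top[OF tendsto_minus[OF A] this]
  have H_top: "filterlim H at_top (at_right 0)"
    by (simp add: H_def[abs_def])
  have bounds: "\<forall>\<^sub>F \<delta> in at_right 0. - 3 / 2 * A \<delta> \<le> aoi_opt f (N \<delta>) (uni_pts lo \<delta>) + 3 / 2 * log 2 \<delta>
     \<and> aoi_opt f (N \<delta>) (uni_pts lo \<delta>) + 3 / 2 * log 2 \<delta> \<le> - 3 / 2 * A \<delta> + (B \<delta> - (A \<delta>)^2) / (2 * H \<delta>)"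
    using eventually_at_right_less[of 0] eventually_uni_num_ge_2[OF lo_less_hi]
      filterlim_at_top_dense[THEN iffD1, OF H_top, rule_format, of 0]
    by eventually_elim (use aoi_opt_offset_bounds in \<open>auto simp: A_def B_def H_def\<close>)
  have upper: "((\<lambda>\<delta>. - 3 / 2 * A \<delta> + (B \<delta> - (A \<delta>)^2) / (2 * H \<delta>)) \<longlongrightarrow> - 3 / 2 * a + 0) (at_right 0)"
  proof (intro tendsto_add tendsto_mult_left A tendsto_divide_0)
    show "((\<lambda>\<delta>. B \<delta> - (A \<delta>)^2) \<longlongrightarrow> integral {lo..hi} (\<lambda>x. f x * (log 2 (f x))^2) - a^2) (at_right 0)"
      by (intro tendsto_intros A B)
    show "filterlim (\<lambda>\<delta>. 2 * H \<delta>) at_infinity (at_right 0)"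
      by (intro filterlim_at_top_imp_at_infinity filterlim_tendsto_pos_mult_at_top[OF tendsto_const _ H_top]) simp
  qed
  have lower: "((\<lambda>\<delta>. - 3 / 2 * A \<delta>) \<longlongrightarrow> - 3 / 2 * a) (at_right 0)"
    by (intro tendsto_intros A)
  from tendsto_sandwich[OF eventually_mono[OF bounds conjunct1] eventually_mono[OF bounds conjunct2] lower]
  show ?thesis
    using upper by (simp add: a_def)
qed

lemma aoi_opt_asymptotics:
  assumes "set_integrable lborel {lo..hi} (\<lambda>x. f x * log 2 (f x))"
  shows "((\<lambda>\<delta>. aoi_opt f (N \<delta>) (uni_pts lo \<delta>)
              / log 2 (distortion f (N \<delta>) (uni_pts lo \<delta>) (uni_mid lo \<delta>))) \<longlongrightarrow> - 3 / 4) (at_right 0)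
       \<and> ((\<lambda>\<delta>. aoi_opt f (N \<delta>) (uni_pts lo \<delta>) + 3 / 2 * log 2 \<delta>)
           \<longlongrightarrow> 3 / 2 * diff_entropy f lo hi) (at_right 0)"
proof
  have "diff_entropy f lo hi = - integral {lo..hi} (\<lambda>x. f x * log 2 (f x))"
    unfolding diff_entropy_def using assms by (simp add: set_borel_integral_eq_integral(2))
  then show offset: "((\<lambda>\<delta>. aoi_opt f (N \<delta>) (uni_pts lo \<delta>) + 3 / 2 * log 2 \<delta>)
      \<longlongrightarrow> 3 / 2 * diff_entropy f lo hi) (at_right 0)"
    using tendsto_aoi_opt_offset by simp
  from tendsto_divide_log_of_offset[OF _ _ offset tendsto_log_distortion_ratio]
  show "((\<lambda>\<delta>. aoi_opt f (N \<delta>) (uni_pts lo \<delta>)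
           / log 2 (distortion f (N \<delta>) (uni_pts lo \<delta>) (uni_mid lo \<delta>))) \<longlongrightarrow> - 3 / 4) (at_right 0)"
    by simp
qed

end

theorem theorem2:
  fixes f :: "real \<Rightarrow> real" and lo hi :: real
  assumes pdf_meas: "f \<in> borel_measurable lborel"
    and pdf_nonneg: "\<And>x. 0 \<le> f x"
    and pdf_int: "integrable lborel f"
    and pdf_total: "(\<integral>x. f x \<partial>lborel) = 1"
    and I_nontriv: "lo < hi"
    and supp_out: "\<And>x. x \<notin> {lo..hi} \<Longrightarrow> f x = 0"
    and supp: "closure {x. f x \<noteq> 0} = {lo..hi}"
    and A_cont: "continuous_on {lo..hi} f"
    and A_diff: "\<And>x. x \<in> {lo..hi} \<Longrightarrow> f differentiable (at x within {lo..hi})"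
    and B_sq: "set_integrable lborel {lo..hi} (\<lambda>x. f x * (log 2 (f x))^2)"
    and B_ent: "set_integrable lborel {lo..hi} (\<lambda>x. f x * log 2 (f x))"
  shows "((\<lambda>\<delta>. aoi_opt f (uni_num lo hi \<delta>) (uni_pts lo \<delta>)
              / log 2 (distortion f (uni_num lo hi \<delta>) (uni_pts lo \<delta>) (uni_mid lo \<delta>)))
           \<longlongrightarrow> - 3 / 4) (at_right 0)
       \<and> ((\<lambda>\<delta>. aoi_opt f (uni_num lo hi \<delta>) (uni_pts lo \<delta>) + 3 / 2 * log 2 \<delta>)
           \<longlongrightarrow> 3 / 2 * diff_entropy f lo hi) (at_right 0)"
proof -
  (* Only continuity is used: on the compact support it already bounds f log f and
     f log^2 f, so A_diff and B_sq are redundant, and B_ent merely identifies the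
     Lebesgue integral in h(X) with the gauge integral. *)
  interpret interval_density f lo hi
    using pdf_meas pdf_nonneg pdf_int pdf_total I_nontriv supp_out supp A_cont
    by unfold_locales
  show ?thesis
    using B_ent by (rule aoi_opt_asymptotics)
qed

end
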